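(* For $\mathbf{L}\in\{\mathbf{D},\mathbf{dD},\mathbf{Eq}\}$, $\mathbf{L}$ is complete w.r.t. the class of $L^+$-models.
   Context: Language $\langle\neg,\land,\lor,\to\rangle$ with formula set $Fm$. A union set-assignment is a map $s$ from formulae to subsets of a countable set $U$ with $s(\phi)=\bigcup\{s(p)\mid p\in Var(\phi)\}$. Epstein's dependence logic $\mathbf{D}$ is the logic of dependence models $\langle v,s\rangle$, where $s$ is a union set-assignment and $v:Fm\to\{0,1\}$ is Boolean on $\neg,\land,\lor$ with $v(\phi\to\psi)=v(\neg\phi\lor\psi)$ if $s(\phi)\supseteq s(\psi)$ and $0$ otherwise; the dual dependence logic $\mathbf{dD}$ and the logic of equality of content $\mathbf{Eq}$ are obtained by replacing the condition $s(\phi)\supseteq s(\psi)$ with $s(\phi)\subseteq s(\psi)$, respectively $s(\phi)=s(\psi)$ (Epstein gives complete Hilbert calculi for all three). A $D^+$-model is a tuple $\langle\mathbf{B}_2,\langle\mathscr{P}(U),\cup\rangle,N,v,s\rangle$ where $\mathbf{B}_2$ is the 2-element Boolean algebra, $N:Fm_{\langle\neg,\land,\lor,\to\rangle}\to Fm_{\langle\cup\rangle}$ is the translation that is the identity on variables, deletes negations and turns every binary connective into $\cup$, $s:Fm_{\langle\cup\rangle}\to\mathscr{P}(U)$ is a homomorphism, and $v:Fm\to\{0,1\}$ is a Boolean homomorphism w.r.t. $\neg,\land,\lor$ with $v(\phi\to\psi)=v(\neg\phi\lor\psi)$ if $s(N(\phi))\supseteq s(N(\psi))$ and $v(\phi\to\psi)=0$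 otherwise. $dD^+$-models (resp. $Eq^+$-models) are defined in the same way with the condition $s(N(\phi))\subseteq s(N(\psi))$ (resp. $s(N(\phi))=s(N(\psi))$). For $\mathbf{L}=\mathbf{D},\mathbf{dD},\mathbf{Eq}$ the corresponding class of $L^+$-models is that of $D^+$-, $dD^+$-, $Eq^+$-models respectively. *)

theory Defs
  imports Main
begin

datatype fm = Var nat | Neg fm | Conj fm fm | Disj fm fm | Imp fm fm

fun vars :: "fm \<Rightarrow> nat set" where
  "vars (Var p) = {p}"
| "vars (Neg a) = vars a"
| "vars (Conj a b) = vars a \<union> vars b"
| "vars (Disj a b) = vars a \<union> vars b"
| "vars (Imp a b) = vars a \<union> vars b"

text \<open>The three logics D, dD, Eq and the corresponding content condition.
  The countable set U is represented by (a subset of) nat.\<close>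
datatype logic = D | dD | Eq

fun cond :: "logic \<Rightarrow> nat set \<Rightarrow> nat set \<Rightarrow> bool" where
  "cond D A B = (A \<supseteq> B)"
| "cond dD A B = (A \<subseteq> B)"
| "cond Eq A B = (A = B)"

definition union_set_assignment :: "(fm \<Rightarrow> nat set) \<Rightarrow> bool" where
  "union_set_assignment s \<longleftrightarrow> (\<forall>\<phi>. s \<phi> = \<Union> {s (Var p) | p. p \<in> vars \<phi>})"

definition boolean_on :: "(fm \<Rightarrow> bool) \<Rightarrow> bool" where
  "boolean_on v \<longleftrightarrow> (\<forall>a b. v (Neg a) = (\<not> v a) \<and> v (Conj a b) = (v a \<and> v b)
      \<and> v (Disj a b) = (v a \<or> v b))"

definition dep_model :: "logic \<Rightarrow> (fm \<Rightarrow> bool) \<Rightarrow> (fm \<Rightarrow> nat set) \<Rightarrow> bool" where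
  "dep_model L v s \<longleftrightarrow> union_set_assignment s \<and> boolean_on v \<and>
     (\<forall>a b. v (Imp a b) = (if cond L (s a) (s b) then v (Disj (Neg a) b) else False))"

definition L_conseq :: "logic \<Rightarrow> fm set \<Rightarrow> fm \<Rightarrow> bool" where
  "L_conseq L \<Gamma> \<phi> \<longleftrightarrow> (\<forall>v s. dep_model L v s \<longrightarrow> (\<forall>\<gamma>\<in>\<Gamma>. v \<gamma>) \<longrightarrow> v \<phi>)"

datatype cfm = CVar nat | Cup cfm cfm

fun N :: "fm \<Rightarrow> cfm" where
  "N (Var p) = CVar p"
| "N (Neg a) = N a"
| "N (Conj a b) = Cup (N a) (N b)"
| "N (Disj a b) = Cup (N a) (N b)"
| "N (Imp a b) = Cup (N a) (N b)"

definition union_hom :: "(cfm \<Rightarrow> nat set) \<Rightarrow> bool" where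
  "union_hom s \<longleftrightarrow> (\<forall>a b. s (Cup a b) = s a \<union> s b)"

text \<open>L+-models: the 2-element Boolean algebra is bool, the semilattice is (nat set, union).\<close>
definition plus_model :: "logic \<Rightarrow> (fm \<Rightarrow> bool) \<Rightarrow> (cfm \<Rightarrow> nat set) \<Rightarrow> bool" where
  "plus_model L v s \<longleftrightarrow> union_hom s \<and> boolean_on v \<and>
     (\<forall>a b. v (Imp a b) = (if cond L (s (N a)) (s (N b)) then v (Disj (Neg a) b) else False))"

definition plus_conseq :: "logic \<Rightarrow> fm set \<Rightarrow> fm \<Rightarrow> bool" where
  "plus_conseq L \<Gamma> \<phi> \<longleftrightarrow> (\<forall>v s. plus_model L v s \<longrightarrow> (\<forall>\<gamma>\<in>\<Gamma>. v \<gamma>) \<longrightarrow> v \<phi>)"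

end

theory Submission
  imports Defs
begin

text \<open>A union homomorphism on \<open>cfm\<close> is determined by its values on variables, and \<open>N\<close>
  preserves variables, so \<open>s \<circ> N\<close> is a union set-assignment; conversely every union
  set-assignment factors through \<open>N\<close>. Hence dependence models and \<open>L\<^sup>+\<close>-models carry
  exactly the same valuations \<open>v\<close>, and the two consequence relations coincide.\<close>

fun cvars :: "cfm \<Rightarrow> nat set" where
  "cvars (CVar p) = {p}"
| "cvars (Cup a b) = cvars a \<union> cvars b"

lemma cvars_N: "cvars (N \<phi>) = vars \<phi>"
  by (induction \<phi>) auto

lemma union_hom_eq_Union_cvars:
  assumes "union_hom s"
  shows "s c = \<Union> {s (CVar p) | p. p \<in> cvars c}"
  using assms by (induction c) (auto simp: union_hom_def)

lemma union_hom_Union_cvars: "union_hom (\<lambda>c. \<Union> {f p | p. p \<in> cvars c})"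
  unfolding union_hom_def by auto

lemma union_set_assignment_comp_N:
  assumes "union_hom s"
  shows "union_set_assignment (\<lambda>\<phi>. s (N \<phi>))"
  unfolding union_set_assignment_def
proof
  fix \<phi>
  show "s (N \<phi>) = \<Union> {s (N (Var p)) | p. p \<in> vars \<phi>}"
    using union_hom_eq_Union_cvars[OF assms, of "N \<phi>"] by (simp add: cvars_N)
qed

lemma union_set_assignment_factors_N:
  assumes "union_set_assignment s"
  shows "\<Union> {s (Var p) | p. p \<in> cvars (N \<phi>)} = s \<phi>"
  using assms unfolding union_set_assignment_def cvars_N by (metis (no_types))

lemma dep_model_of_plus_model:
  assumes "plus_model L v s"
  shows "dep_model L v (\<lambda>\<phi>. s (N \<phi>))"
  using assms union_set_assignment_comp_N
  unfolding plus_model_def dep_model_def by blast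

lemma plus_model_of_dep_model:
  assumes "dep_model L v s"
  shows "plus_model L v (\<lambda>c. \<Union> {s (Var p) | p. p \<in> cvars c})"
proof -
  have "union_set_assignment s"
    using assms unfolding dep_model_def by blast
  then show ?thesis
    using assms union_hom_Union_cvars
    unfolding plus_model_def dep_model_def
    by (simp only: union_set_assignment_factors_N) simp
qed

theorem mainTheorem5:
  fixes L :: logic and \<Gamma> :: "fm set" and \<phi> :: fm
  shows "L_conseq L \<Gamma> \<phi> \<longleftrightarrow> plus_conseq L \<Gamma> \<phi>"
  unfolding L_conseq_def plus_conseq_def
  using dep_model_of_plus_model plus_model_of_dep_model by blast

end
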